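(* Let $p$ be a prime and $0<\alpha\leq 1$. Then the generic $\alpha$-complexity of the whole field $\mathbb{Z}_p$ satisfies $$\sqrt{2\alpha p}<\mathcal{C}_{\alpha}(\mathbb{Z}_p)\leq 2\lceil\sqrt{\alpha p}\rceil.$$
   Context: $\mathbb{Z}_p$ denotes the field of residues modulo the prime $p$. For a set of pairs $L\subseteq\mathbb{Z}_p^2$, its intersection set is $I(L)=\{x\in\mathbb{Z}_p\mid \exists (a,b),(a',b')\in L \text{ with } (a,b)\neq(a',b') \text{ and } ax+b=a'x+b'\}$. For $S\subseteq\mathbb{Z}_p$ and $0<\alpha\leq1$, the generic $\alpha$-complexity $\mathcal{C}_\alpha(S)$ is the smallest cardinality of a set $L\subseteq\mathbb{Z}_p^2$ with $|S\cap I(L)|\geq\alpha|S|$. *)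

theory Defs
  imports "HOL-Analysis.Analysis"
begin

text \<open>The field Z_p is modelled by the residues {0..<p} (natural numbers) with
  arithmetic mod p; pairs (a,b) represent the lines x \<mapsto> a x + b.\<close>

definition Zp :: "nat \<Rightarrow> nat set" where
  "Zp p = {0..<p}"

definition intersection_set :: "nat \<Rightarrow> (nat \<times> nat) set \<Rightarrow> nat set" where
  "intersection_set p L = {x \<in> Zp p. \<exists>a b a' b'. (a, b) \<in> L \<and> (a', b') \<in> L \<and>
      (a, b) \<noteq> (a', b') \<and> (a * x + b) mod p = (a' * x + b') mod p}"

definition generic_complexity :: "nat \<Rightarrow> real \<Rightarrow> nat set \<Rightarrow> nat" where
  "generic_complexity p \<alpha> S = (LEAST n. \<exists>L. L \<subseteq> Zp p \<times> Zp p \<and> card L = n \<and>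
      real (card (S \<inter> intersection_set p L)) \<ge> \<alpha> * real (card S))"

end

theory Submission
  imports Defs "HOL-Number_Theory.Cong"
begin

text \<open>Two distinct lines over \<open>\<int>\<^sub>p\<close> meet in at most one point, so \<open>n\<close> lines
  have at most \<open>n(n-1)/2 < n\<^sup>2/2\<close> intersection points; covering \<open>\<alpha> p\<close> points
  therefore needs more than \<open>\<surd>(2\<alpha>p)\<close> lines. Conversely, for \<open>k = \<lceil>\<surd>(\<alpha>p)\<rceil>\<close> the
  \<open>k\<close> horizontal lines \<open>y = jk\<close> and the \<open>k\<close> lines \<open>y = x - i\<close> (\<open>i, j < k\<close>) meet
  in the \<open>min(k\<^sup>2, p) \<ge> \<alpha>p\<close> points \<open>x = jk + i\<close>.\<close>

lemma lines_meet_at_most_once: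
  fixes a b a' b' x y :: nat
  assumes "prime p"
    and "a < p" "a' < p" "b < p" "b' < p" "x < p" "y < p"
    and "(a, b) \<noteq> (a', b')"
    and x: "[a * x + b = a' * x + b'] (mod p)"
    and y: "[a * y + b = a' * y + b'] (mod p)"
  shows "x = y"
proof -
  have eq_of_dvd: "u = v" if "u < p" "v < p" "int p dvd int u - int v" for u v :: nat
  proof -
    have "[int u = int v] (mod int p)"
      using that(3) by (simp add: cong_iff_dvd_diff)
    then show "u = v"
      using that(1,2) by (simp add: cong_int_iff cong_less_imp_eq_nat)
  qed
  have dvd_of_cong: "int p dvd (int a * int z + int b) - (int a' * int z + int b')"
    if "[a * z + b = a' * z + b'] (mod p)" for z
    using that cong_int_iff[of "a * z + b" "a' * z + b'" p] by (simp add: cong_iff_dvd_diff)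
  have "int p dvd ((int a * int x + int b) - (int a' * int x + int b'))
                - ((int a * int y + int b) - (int a' * int y + int b'))"
    using dvd_of_cong[OF x] dvd_of_cong[OF y] by (rule dvd_diff)
  also have "\<dots> = (int a - int a') * (int x - int y)"
    by (simp add: algebra_simps)
  finally consider "int p dvd int a - int a'" | "int p dvd int x - int y"
    using prime_dvd_mult_iff[of "int p"] \<open>prime p\<close> by auto
  then show "x = y"
  proof cases
    case 1
    then have "a = a'" using eq_of_dvd assms(2,3) by blast
    with x have "[b = b'] (mod p)" by (simp add: cong_add_lcancel_nat)
    then have "b = b'" using assms(4,5) by (simp add: cong_def)
    with \<open>a = a'\<close> assms(8) show ?thesis by simp
  next
    case 2
    then show ?thesis using eq_of_dvd assms(6,7) by blast
  qed
qed

definition common_points :: "nat \<Rightarrow> (nat \<times> nat) set \<Rightarrow> nat set" where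
  "common_points p B = {x \<in> Zp p. \<forall>(a, b) \<in> B. \<forall>(a', b') \<in> B. [a * x + b = a' * x + b'] (mod p)}"

lemma intersection_set_subset_common_points:
  "intersection_set p L \<subseteq> (\<Union>B \<in> {B. B \<subseteq> L \<and> card B = 2}. common_points p B)"
proof
  fix x assume "x \<in> intersection_set p L"
  then obtain a b a' b' where "x \<in> Zp p" "(a, b) \<in> L" "(a', b') \<in> L" "(a, b) \<noteq> (a', b')"
    "[a * x + b = a' * x + b'] (mod p)"
    unfolding intersection_set_def cong_def by blast
  then show "x \<in> (\<Union>B \<in> {B. B \<subseteq> L \<and> card B = 2}. common_points p B)"
    unfolding common_points_def
    by (intro UN_I[of "{(a, b), (a', b')}"]) (auto intro: cong_sym)
qed

lemma card_common_points_le_1: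
  assumes "prime p" "B \<subseteq> Zp p \<times> Zp p" "card B = 2"
  shows "card (common_points p B) \<le> 1"
proof -
  obtain a b a' b' where B: "B = {(a, b), (a', b')}" "(a, b) \<noteq> (a', b')"
    using \<open>card B = 2\<close> by (metis card_2_iff surj_pair)
  have "x = y" if "x \<in> common_points p B" "y \<in> common_points p B" for x y
    using that assms(2) B lines_meet_at_most_once[OF \<open>prime p\<close>, of a a' b b' x y]
    by (auto simp: common_points_def Zp_def)
  moreover have "finite (common_points p B)"
    by (simp add: common_points_def Zp_def)
  ultimately show ?thesis by (metis One_nat_def card_le_Suc0_iff_eq)
qed

lemma card_intersection_set_le_choose_two:
  assumes "prime p" "L \<subseteq> Zp p \<times> Zp p"
  shows "card (intersection_set p L) \<le> card L choose 2"
proof -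
  let ?pairs = "{B. B \<subseteq> L \<and> card B = 2}"
  have "finite L" using assms(2) finite_subset by (auto simp: Zp_def)
  then have "finite ?pairs" by simp
  have "card (intersection_set p L) \<le> card (\<Union>B \<in> ?pairs. common_points p B)"
    using \<open>finite ?pairs\<close> intersection_set_subset_common_points
    by (intro card_mono) (auto simp: common_points_def Zp_def)
  also have "\<dots> \<le> (\<Sum>B \<in> ?pairs. card (common_points p B))"
    by (rule card_UN_le[OF \<open>finite ?pairs\<close>])
  also have "\<dots> \<le> (\<Sum>B \<in> ?pairs. 1)"
    using assms by (intro sum_mono card_common_points_le_1) auto
  also have "\<dots> = card L choose 2"
    using n_subsets[OF \<open>finite L\<close>] by simp
  finally show ?thesis .
qed

lemma sqrt_two_mul_less_of_le_choose_two:
  fixes c :: real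
  assumes "0 < c" "c \<le> real (n choose 2)"
  shows "sqrt (2 * c) < real n"
proof -
  have "0 < n choose 2" using assms by linarith
  then have "2 * (n choose 2) < n\<^sup>2"
    by (cases n) (auto simp: choose_two power2_eq_square)
  then have "2 * real (n choose 2) < (real n)\<^sup>2"
    by (metis of_nat_less_iff of_nat_mult of_nat_numeral of_nat_power)
  then have "2 * c < (real n)\<^sup>2"
    using assms(2) by linarith
  then show ?thesis by (simp add: real_less_lsqrt)
qed

lemma sqrt_less_card_of_covering:
  assumes "prime p" "L \<subseteq> Zp p \<times> Zp p"
    and "0 < c" "c \<le> real (card (S \<inter> intersection_set p L))"
  shows "sqrt (2 * c) < real (card L)"
proof (rule sqrt_two_mul_less_of_le_choose_two[OF \<open>0 < c\<close>])
  have "card (S \<inter> intersection_set p L) \<le> card (intersection_set p L)"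
    by (rule card_mono) (auto simp: intersection_set_def Zp_def)
  also have "\<dots> \<le> card L choose 2"
    using assms(1,2) by (rule card_intersection_set_le_choose_two)
  finally show "c \<le> real (card L choose 2)"
    using assms(4) by linarith
qed

definition grid_lines :: "nat \<Rightarrow> nat \<Rightarrow> (nat \<times> nat) set" where
  "grid_lines p k = (\<lambda>j. (0, j * k mod p)) ` {..<k} \<union> (\<lambda>i. (1, (p - i) mod p)) ` {..<k}"

lemma grid_lines_subset: "1 < p \<Longrightarrow> grid_lines p k \<subseteq> Zp p \<times> Zp p"
  by (auto simp: grid_lines_def Zp_def)

lemma card_grid_lines_le: "card (grid_lines p k) \<le> 2 * k"
proof -
  have "card (grid_lines p k) \<le> card ((\<lambda>j. (0::nat, j * k mod p)) ` {..<k})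
                               + card ((\<lambda>i. (1::nat, (p - i) mod p)) ` {..<k})"
    unfolding grid_lines_def by (rule card_Un_le)
  also have "\<dots> \<le> k + k"
    by (intro add_mono) (metis card_image_le card_lessThan finite_lessThan)+
  finally show ?thesis by simp
qed

lemma grid_lines_cover: "{..<min (k * k) p} \<subseteq> intersection_set p (grid_lines p k)"
proof
  fix x assume "x \<in> {..<min (k * k) p}"
  then have "x < k * k" "x < p" by auto
  define j i where "j = x div k" and "i = x mod k"
  have "0 < k" using \<open>x < k * k\<close> by (cases k) auto
  then have "j < k" "i < k"
    using \<open>x < k * k\<close> by (auto simp: j_def i_def less_mult_imp_div_less)
  then have lines: "(0, j * k mod p) \<in> grid_lines p k" "(1, (p - i) mod p) \<in> grid_lines p k"
    by (auto simp: grid_lines_def)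
  have "x = j * k + i" by (simp add: i_def j_def)
  then have "x + (p - i) = j * k + p"
    using \<open>x < p\<close> by linarith
  then have "(0 * x + j * k mod p) mod p = (1 * x + (p - i) mod p) mod p"
    by (simp add: mod_add_right_eq)
  moreover have "(0::nat, j * k mod p) \<noteq> (1, (p - i) mod p)" by simp
  ultimately show "x \<in> intersection_set p (grid_lines p k)"
    using lines \<open>x < p\<close> unfolding intersection_set_def Zp_def atLeastLessThan_iff
    by blast
qed

lemma grid_lines_covers_fraction:
  assumes "0 \<le> \<alpha>" "\<alpha> \<le> 1" "\<alpha> * real p \<le> real (k * k)"
  shows "\<alpha> * real (card (Zp p)) \<le> real (card (Zp p \<inter> intersection_set p (grid_lines p k)))"
proof -
  have "\<alpha> * real p \<le> real p"
    using assms(1,2) by (intro mult_left_le_one_le) auto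
  with assms(3) have "\<alpha> * real p \<le> real (card {..<min (k * k) p})"
    by (simp add: min_def)
  also have "\<dots> \<le> real (card (Zp p \<inter> intersection_set p (grid_lines p k)))"
    using grid_lines_cover by (intro of_nat_mono card_mono) (auto simp: Zp_def)
  finally show ?thesis by (simp add: Zp_def)
qed

lemma le_square_nat_ceiling_sqrt:
  fixes y :: real
  assumes "0 \<le> y"
  shows "y \<le> real (nat \<lceil>sqrt y\<rceil> * nat \<lceil>sqrt y\<rceil>)"
proof -
  have "y = (sqrt y)\<^sup>2"
    using assms by simp
  also have "\<dots> \<le> (real (nat \<lceil>sqrt y\<rceil>))\<^sup>2"
    using assms by (intro power_mono) auto
  finally show ?thesis
    by (simp add: power2_eq_square)
qed

lemma generic_complexity_le:
  assumes "L \<subseteq> Zp p \<times> Zp p" "\<alpha> * real (card S) \<le> real (card (S \<inter> intersection_set p L))"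
  shows "generic_complexity p \<alpha> S \<le> card L"
  unfolding generic_complexity_def using assms by (intro Least_le) blast

lemma generic_complexity_attained:
  assumes "L \<subseteq> Zp p \<times> Zp p" "\<alpha> * real (card S) \<le> real (card (S \<inter> intersection_set p L))"
  obtains L' where "L' \<subseteq> Zp p \<times> Zp p" "card L' = generic_complexity p \<alpha> S"
    "\<alpha> * real (card S) \<le> real (card (S \<inter> intersection_set p L'))"
proof -
  have "\<exists>n L'. L' \<subseteq> Zp p \<times> Zp p \<and> card L' = n \<and>
      \<alpha> * real (card S) \<le> real (card (S \<inter> intersection_set p L'))"
    using assms by blast
  from LeastI_ex[OF this] show ?thesis
    using that unfolding generic_complexity_def by blast
qed

theorem proposition2:
  fixes p :: nat and \<alpha> :: real
  assumes "prime p" and "0 < \<alpha>" and "\<alpha> \<le> 1"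
  shows "sqrt (2 * \<alpha> * real p) < real (generic_complexity p \<alpha> (Zp p))
       \<and> real (generic_complexity p \<alpha> (Zp p)) \<le> 2 * of_int \<lceil>sqrt (\<alpha> * real p)\<rceil>"
proof -
  have "1 < p" "card (Zp p) = p"
    using prime_gt_1_nat[OF \<open>prime p\<close>] by (auto simp: Zp_def)
  define k where "k = nat \<lceil>sqrt (\<alpha> * real p)\<rceil>"
  have cover: "\<alpha> * real (card (Zp p)) \<le> real (card (Zp p \<inter> intersection_set p (grid_lines p k)))"
    using assms le_square_nat_ceiling_sqrt[of "\<alpha> * real p"]
    by (intro grid_lines_covers_fraction) (auto simp: k_def)
  have "generic_complexity p \<alpha> (Zp p) \<le> 2 * k"
    using generic_complexity_le[OF grid_lines_subset[OF \<open>1 < p\<close>] cover] card_grid_lines_le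
    by (rule order_trans)
  moreover have "real k = of_int \<lceil>sqrt (\<alpha> * real p)\<rceil>"
    using assms by (simp add: k_def)
  moreover obtain L where L: "L \<subseteq> Zp p \<times> Zp p" "card L = generic_complexity p \<alpha> (Zp p)"
    "\<alpha> * real (card (Zp p)) \<le> real (card (Zp p \<inter> intersection_set p L))"
    by (rule generic_complexity_attained[OF grid_lines_subset[OF \<open>1 < p\<close>] cover])
  then have "sqrt (2 * (\<alpha> * real p)) < real (card L)"
    using \<open>card (Zp p) = p\<close> \<open>0 < \<alpha>\<close> \<open>1 < p\<close>
    by (intro sqrt_less_card_of_covering[OF \<open>prime p\<close> L(1)]) simp_all
  ultimately show ?thesis
    using L(2) by (simp add: mult.assoc)
qed

end
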